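(* Let $\alpha,\beta,p^r,q_{max},M,B,\overline{v}>0$ with $4\alpha p^r>\beta^2$ and $\delta\in[0,1]$. Let $D_0:[0,\infty)\to\mathbb{R}$ be differentiable, concave and strictly increasing. Let $X$ be a cumulative distribution function with density $x>0$ on $(0,\overline{v})$ and support in $[0,\overline{v}]$, let $y$ be the inverse of the strictly decreasing bijection $p\mapsto MB(1-X(p))/p$ from $(0,\overline{v})$ onto $(0,\infty)$, and assume $D\mapsto D\,y(D)$ is concave and differentiable on $D>0$. For a side-payment price $p^t\ge0$, consider the problem in which the ISP chooses $(p^s,q)$ with $p^s\ge0$, $0<q\le q_{max}$, and the CP chooses investment $c$, with demand $D=D_0(c)-\alpha p^s+\beta q$ and utilities $U_{isp}=(p^s-p^r)D+(1-\delta)p^tD-p^rq^2$, $U_{cp}=y(D)D-p^tD-c$; a best strategy is a triple $(p^{s*},q^*,c^* )$ with $(p^{s*},q^* )$ maximizing $U_{isp}$ given $c^*$ and $c^*$ maximizing $U_{cp}$ given $(p^{s*},q^* )$. Let $0\le p^t_x<p^t_y$ and let $(p^{s*}_x,q^*_x,c^*_x)$ and $(p^{s*}_y,q^*_y,c^*_y)$ be best strategies for $p^t_x$ and $p^t_y$ respectively, each satisfying $p^{s*}>0$, $q^*>0$ (with $q^*<q_{max}$) and $c^*>0$. Then $c^*_x>c^*_y$; that is, the optimal investment of the CP is decreasing in the side-payment price.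
   Context: Advertisement model: the CP earns advertising revenue $y(D)D$ from user demand $D$ (where $y(D)$ is the optimal price per attention, determined by $MB(1-X(y(D)))/y(D)=D$ for $M$ advertisers with budget $B$ and valuation cdf $X$), invests $c$ in content raising potential demand to $D_0(c)$, and pays the ISP $p^t$ per unit of demand, taxed at rate $\delta$. The ISP sets user price $p^s$ and QoS $q$, paying $p^r$ per unit of bandwidth. *)

theory Defs
  imports "HOL-Analysis.Analysis"
begin

definition demand :: "(real \<Rightarrow> real) \<Rightarrow> real \<Rightarrow> real \<Rightarrow> real \<Rightarrow> real \<Rightarrow> real \<Rightarrow> real" where
  "demand D0 \<alpha> \<beta> ps q c = D0 c - \<alpha> * ps + \<beta> * q"

definition U_isp :: "(real \<Rightarrow> real) \<Rightarrow> real \<Rightarrow> real \<Rightarrow> real \<Rightarrow> real \<Rightarrow> real \<Rightarrow> real \<Rightarrow> real \<Rightarrow> real \<Rightarrow> real" where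
  "U_isp D0 \<alpha> \<beta> pr \<delta> pt ps q c =
     (let D = demand D0 \<alpha> \<beta> ps q c in (ps - pr) * D + (1 - \<delta>) * pt * D - pr * q^2)"

definition U_cp :: "(real \<Rightarrow> real) \<Rightarrow> (real \<Rightarrow> real) \<Rightarrow> real \<Rightarrow> real \<Rightarrow> real \<Rightarrow> real \<Rightarrow> real \<Rightarrow> real \<Rightarrow> real" where
  "U_cp D0 y \<alpha> \<beta> pt ps q c =
     (let D = demand D0 \<alpha> \<beta> ps q c in y D * D - pt * D - c)"

text \<open>Since y (hence the CP revenue) is only defined for positive demand, the CP's
  feasible investments are those producing positive demand.\<close>
definition best_strategy ::
  "(real \<Rightarrow> real) \<Rightarrow> (real \<Rightarrow> real) \<Rightarrow> real \<Rightarrow> real \<Rightarrow> real \<Rightarrow> real \<Rightarrow> real \<Rightarrow> real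
   \<Rightarrow> real \<Rightarrow> real \<Rightarrow> real \<Rightarrow> bool" where
  "best_strategy D0 y \<alpha> \<beta> pr \<delta> qmax pt ps q c \<longleftrightarrow>
     ps \<ge> 0 \<and> 0 < q \<and> q \<le> qmax \<and> c \<ge> 0 \<and> demand D0 \<alpha> \<beta> ps q c > 0 \<and>
     (\<forall>ps' q'. ps' \<ge> 0 \<and> 0 < q' \<and> q' \<le> qmax \<longrightarrow>
        U_isp D0 \<alpha> \<beta> pr \<delta> pt ps' q' c \<le> U_isp D0 \<alpha> \<beta> pr \<delta> pt ps q c) \<and>
     (\<forall>c'. c' \<ge> 0 \<and> demand D0 \<alpha> \<beta> ps q c' > 0 \<longrightarrow>
        U_cp D0 y \<alpha> \<beta> pt ps q c' \<le> U_cp D0 y \<alpha> \<beta> pt ps q c)"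

end

theory Submission
  imports Defs
begin

text \<open>Interior first-order conditions pin down a best strategy. The ISP's two conditions give
  equilibrium demand in closed form, \<open>(4\<alpha>p\<^sup>r - \<beta>\<^sup>2) D = 2\<alpha>p\<^sup>r (D\<^sub>0(c) - \<alpha>p\<^sup>r + \<alpha>(1-\<delta>)p\<^sup>t)\<close>,
  which is nondecreasing in both \<open>c\<close> and \<open>p\<^sup>t\<close> because \<open>4\<alpha>p\<^sup>r > \<beta>\<^sup>2\<close>. The CP's condition reads
  \<open>(R'(D) - p\<^sup>t) D\<^sub>0'(c) = 1\<close> with \<open>R(D) = D y(D)\<close>. If \<open>c\<^sub>x \<le> c\<^sub>y\<close>, then \<open>D\<^sub>x \<le> D\<^sub>y\<close>, and concavity
  of \<open>R\<close> and \<open>D\<^sub>0\<close> gives \<open>R'(D\<^sub>y) - p\<^sup>t\<^sub>y < R'(D\<^sub>x) - p\<^sup>t\<^sub>x\<close> and \<open>0 < D\<^sub>0'(c\<^sub>y) \<le> D\<^sub>0'(c\<^sub>x)\<close>, so the two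
  products cannot both equal 1.\<close>

lemma concave_on_deriv_tangent:
  fixes f :: "real \<Rightarrow> real"
  assumes "concave_on A f" "connected A" "c \<in> interior A" "x \<in> A"
    and "(f has_real_derivative f') (at c)"
  shows "f x - f c \<le> f' * (x - c)"
proof -
  have convex: "convex_on A (\<lambda>x. - f x)"
    using assms(1) by (simp add: concave_on_def)
  from convex_on_imp_above_tangent[OF convex assms(2-4)
      has_field_derivative_at_within[OF DERIV_minus[OF assms(5)]]]
  have "- f x - - f c \<ge> - f' * (x - c)" .
  then show ?thesis by simp
qed

lemma one_less_mult_of_mult_eq_one:
  fixes a b u v :: real
  assumes "a * u = 1" "a < b" "0 < u" "u \<le> v"
  shows "1 < b * v"
proof -
  have "0 < a" using assms(1,3) by (metis zero_less_mult_pos2 zero_less_one)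
  then have "a * u \<le> a * v" using assms(4) by simp
  also have "\<dots> < b * v" using assms(2-4) by simp
  finally show ?thesis using assms(1) by simp
qed

lemma concave_on_deriv_antimono:
  fixes f :: "real \<Rightarrow> real"
  assumes "concave_on A f" "connected A" "a \<in> interior A" "b \<in> interior A" "a \<le> b"
    and "(f has_real_derivative f'a) (at a)" "(f has_real_derivative f'b) (at b)"
  shows "f'b \<le> f'a"
proof (cases "a = b")
  case True
  with assms(6,7) show ?thesis using DERIV_unique by fastforce
next
  case False
  have "a \<in> A" "b \<in> A" using assms(3,4) interior_subset by blast+
  then have "f b - f a \<le> f'a * (b - a)" "f a - f b \<le> f'b * (a - b)"
    using concave_on_deriv_tangent assms by blast+
  then have "(f'b - f'a) * (b - a) \<le> 0" by (simp add: algebra_simps)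
  moreover have "b - a > 0" using False assms(5) by simp
  ultimately show ?thesis by (simp add: mult_le_0_iff)
qed

lemma concave_strict_mono_deriv_pos:
  fixes f :: "real \<Rightarrow> real"
  assumes "concave_on A f" "connected A" "strict_mono_on A f"
    and "c \<in> interior A" "b \<in> A" "c < b" "(f has_real_derivative f') (at c)"
  shows "f' > 0"
proof -
  have "f c < f b"
    using assms(3-6) interior_subset by (blast intro: strict_mono_onD)
  moreover have "f b - f c \<le> f' * (b - c)"
    using concave_on_deriv_tangent assms(1,2,4,5,7) .
  ultimately have "0 < f' * (b - c)" by linarith
  with assms(6) show ?thesis by (simp add: zero_less_mult_iff)
qed

lemma DERIV_local_max_eventually:
  fixes f :: "real \<Rightarrow> real"
  assumes "(f has_real_derivative l) (at x)" "eventually (\<lambda>y. f y \<le> f x) (at x)"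
  shows "l = 0"
proof -
  have "(*) l = (\<lambda>h. 0)"
    using has_derivative_local_max assms by (auto simp: has_field_derivative_def)
  then show ?thesis by (metis mult.right_neutral)
qed

lemma eventually_at_gt: "a < x \<Longrightarrow> eventually (\<lambda>t. a < t) (at (x::'a::linorder_topology))"
  using order_tendstoD(1)[OF tendsto_ident_at] .

lemma eventually_at_lt: "x < b \<Longrightarrow> eventually (\<lambda>t. t < b) (at (x::'a::linorder_topology))"
  using order_tendstoD(2)[OF tendsto_ident_at] .

lemma best_strategy_demand_pos:
  "best_strategy D0 y \<alpha> \<beta> pr \<delta> qmax pt ps q c \<Longrightarrow> demand D0 \<alpha> \<beta> ps q c > 0"
  unfolding best_strategy_def by (elim conjE)

lemma best_strategy_isp_first_order:
  assumes bs: "best_strategy D0 y \<alpha> \<beta> pr \<delta> qmax pt ps q c"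
    and int: "ps > 0" "q < qmax"
  shows "demand D0 \<alpha> \<beta> ps q c = \<alpha> * (ps - pr + (1 - \<delta>) * pt)"
    and "\<beta> * (ps - pr + (1 - \<delta>) * pt) = 2 * pr * q"
proof -
  define m where "m = ps - pr + (1 - \<delta>) * pt"
  have q_pos: "q > 0" using bs by (simp add: best_strategy_def)
  have isp_max: "\<And>ps' q'. ps' \<ge> 0 \<Longrightarrow> 0 < q' \<Longrightarrow> q' \<le> qmax \<Longrightarrow>
      U_isp D0 \<alpha> \<beta> pr \<delta> pt ps' q' c \<le> U_isp D0 \<alpha> \<beta> pr \<delta> pt ps q c"
    using bs unfolding best_strategy_def by blast
  have price_max: "\<And>s. s > 0 \<Longrightarrow> U_isp D0 \<alpha> \<beta> pr \<delta> pt s q c \<le> U_isp D0 \<alpha> \<beta> pr \<delta> pt ps q c"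
    using isp_max q_pos int(2) by simp
  let ?f = "\<lambda>s. U_isp D0 \<alpha> \<beta> pr \<delta> pt s q c"
  have "?f = (\<lambda>s. (s - pr + (1 - \<delta>) * pt) * (D0 c - \<alpha> * s + \<beta> * q) - pr * q^2)"
    by (auto simp: U_isp_def demand_def Let_def algebra_simps)
  then have "(?f has_real_derivative (D0 c - \<alpha> * ps + \<beta> * q) - \<alpha> * m) (at ps)"
    unfolding m_def by (auto intro!: derivative_eq_intros)
  moreover have "eventually (\<lambda>s. ?f s \<le> ?f ps) (at ps)"
    using eventually_at_gt[OF int(1)] by (rule eventually_mono) (rule price_max)
  ultimately have "(D0 c - \<alpha> * ps + \<beta> * q) - \<alpha> * m = 0"
    by (rule DERIV_local_max_eventually)
  then show "demand D0 \<alpha> \<beta> ps q c = \<alpha> * m" by (simp add: demand_def)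
  let ?g = "\<lambda>t. U_isp D0 \<alpha> \<beta> pr \<delta> pt ps t c"
  have "?g = (\<lambda>t. m * (D0 c - \<alpha> * ps + \<beta> * t) - pr * t^2)"
    by (auto simp: U_isp_def demand_def Let_def m_def algebra_simps)
  then have "(?g has_real_derivative m * \<beta> - pr * (2 * q)) (at q)"
    by (auto intro!: derivative_eq_intros)
  moreover have "eventually (\<lambda>t. ?g t \<le> ?g q) (at q)"
    using eventually_at_gt[OF q_pos] eventually_at_lt[OF int(2)]
    by eventually_elim (use isp_max int(1) in simp)
  ultimately have "m * \<beta> - pr * (2 * q) = 0"
    by (rule DERIV_local_max_eventually)
  then show "\<beta> * m = 2 * pr * q" by (simp add: algebra_simps)
qed

lemma best_strategy_demand_closed_form:
  assumes "best_strategy D0 y \<alpha> \<beta> pr \<delta> qmax pt ps q c" "ps > 0" "q < qmax"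
  shows "(4 * \<alpha> * pr - \<beta>^2) * demand D0 \<alpha> \<beta> ps q c
           = 2 * \<alpha> * pr * (D0 c - \<alpha> * pr + \<alpha> * (1 - \<delta>) * pt)"
proof -
  define m where "m = ps - pr + (1 - \<delta>) * pt"
  have demand_m: "demand D0 \<alpha> \<beta> ps q c = \<alpha> * m" and qos: "\<beta> * m = 2 * pr * q"
    using best_strategy_isp_first_order[OF assms] by (simp_all add: m_def)
  then have "\<alpha> * m = D0 c - \<alpha> * ps + \<beta> * q"
    by (simp add: demand_def)
  then have "2 * pr * (\<alpha> * m) = 2 * pr * D0 c - 2 * pr * \<alpha> * ps + \<beta> * (2 * pr * q)"
    by (simp only:) (simp add: algebra_simps)
  also have "\<dots> = 2 * pr * D0 c - 2 * pr * \<alpha> * (m + pr - (1 - \<delta>) * pt) + \<beta> * (\<beta> * m)"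
    using qos by (simp add: m_def)
  finally have "(4 * \<alpha> * pr - \<beta>^2) * m = 2 * pr * (D0 c - \<alpha> * pr + \<alpha> * (1 - \<delta>) * pt)"
    by (simp add: algebra_simps power2_eq_square)
  with demand_m show ?thesis
    by (metis mult.assoc mult.left_commute)
qed

lemma best_strategy_demand_mono:
  assumes "\<alpha> > 0" "pr > 0" "\<delta> \<le> 1" "\<beta>^2 < 4 * \<alpha> * pr"
    and bs1: "best_strategy D0 y \<alpha> \<beta> pr \<delta> qmax pt1 ps1 q1 c1" "ps1 > 0" "q1 < qmax"
    and bs2: "best_strategy D0 y \<alpha> \<beta> pr \<delta> qmax pt2 ps2 q2 c2" "ps2 > 0" "q2 < qmax"
    and "D0 c1 \<le> D0 c2" "pt1 \<le> pt2"
  shows "demand D0 \<alpha> \<beta> ps1 q1 c1 \<le> demand D0 \<alpha> \<beta> ps2 q2 c2"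
proof -
  have "\<alpha> * (1 - \<delta>) * pt1 \<le> \<alpha> * (1 - \<delta>) * pt2"
    using assms(1,3,12) by (intro mult_left_mono) auto
  then have "D0 c1 - \<alpha> * pr + \<alpha> * (1 - \<delta>) * pt1 \<le> D0 c2 - \<alpha> * pr + \<alpha> * (1 - \<delta>) * pt2"
    using assms(11) by linarith
  then have "(4 * \<alpha> * pr - \<beta>^2) * demand D0 \<alpha> \<beta> ps1 q1 c1
      \<le> (4 * \<alpha> * pr - \<beta>^2) * demand D0 \<alpha> \<beta> ps2 q2 c2"
    unfolding best_strategy_demand_closed_form[OF bs1] best_strategy_demand_closed_form[OF bs2]
    using assms(1,2) by (intro mult_left_mono) auto
  then show ?thesis using assms(4) by (simp add: mult_le_cancel_left)
qed

lemma best_strategy_cp_first_order: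
  assumes bs: "best_strategy D0 y \<alpha> \<beta> pr \<delta> qmax pt ps q c" and "c > 0"
    and D0_deriv: "(D0 has_real_derivative d0) (at c)"
    and R_deriv: "((\<lambda>D. D * y D) has_real_derivative r) (at (demand D0 \<alpha> \<beta> ps q c))"
  shows "(r - pt) * d0 = 1"
proof -
  let ?K = "\<beta> * q - \<alpha> * ps"
  let ?h = "\<lambda>c'. U_cp D0 y \<alpha> \<beta> pt ps q c'"
  have cp_max: "\<And>c'. c' \<ge> 0 \<Longrightarrow> D0 c' + ?K > 0 \<Longrightarrow> ?h c' \<le> ?h c"
    using bs unfolding best_strategy_def demand_def by (auto simp: algebra_simps)
  have demand_eq: "demand D0 \<alpha> \<beta> ps q c = D0 c + ?K"
    by (simp add: demand_def)
  have inner: "((\<lambda>c'. D0 c' + ?K) has_real_derivative d0) (at c)"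
    using D0_deriv by (auto intro!: derivative_eq_intros)
  have "?h = (\<lambda>c'. (\<lambda>D. D * y D) (D0 c' + ?K) - pt * (D0 c' + ?K) - c')"
    by (auto simp: U_cp_def demand_def Let_def algebra_simps)
  moreover have "((\<lambda>c'. (\<lambda>D. D * y D) (D0 c' + ?K)) has_real_derivative r * d0) (at c)"
    using DERIV_chain2[OF R_deriv[unfolded demand_eq] inner] by simp
  ultimately have "(?h has_real_derivative r * d0 - pt * d0 - 1) (at c)"
    using DERIV_diff[OF DERIV_diff[OF _ DERIV_cmult[OF inner, of pt]] DERIV_ident] by simp
  moreover have "eventually (\<lambda>c'. ?h c' \<le> ?h c) (at c)"
  proof -
    have "((\<lambda>c'. D0 c' + ?K) \<longlongrightarrow> D0 c + ?K) (at c)"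
      using DERIV_isCont[OF inner] by (simp add: isCont_def)
    moreover have "D0 c + ?K > 0"
      using best_strategy_demand_pos[OF bs] demand_eq by simp
    ultimately have "eventually (\<lambda>c'. D0 c' + ?K > 0) (at c)"
      using order_tendstoD(1) by blast
    with eventually_at_gt[OF \<open>c > 0\<close>] show ?thesis
      by eventually_elim (use cp_max in auto)
  qed
  ultimately have "r * d0 - pt * d0 - 1 = 0"
    by (rule DERIV_local_max_eventually)
  then show ?thesis by (simp add: algebra_simps)
qed

theorem lemma6:
  fixes \<alpha> \<beta> pr qmax M B vbar \<delta> :: real
    and D0 X x y :: "real \<Rightarrow> real"
    and ptx pty psx qx cx psy qy cy :: real
  assumes pos: "\<alpha> > 0" "\<beta> > 0" "pr > 0" "qmax > 0" "M > 0" "B > 0" "vbar > 0"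
    and disc: "4 * \<alpha> * pr > \<beta>^2"
    and delta: "0 \<le> \<delta>" "\<delta> \<le> 1"
    and D0_diff: "\<And>c. c \<ge> 0 \<Longrightarrow> D0 differentiable (at c within {0..})"
    and D0_concave: "concave_on {0..} D0"
    and D0_incr: "strict_mono_on {0..} D0"
    and X_low: "\<And>t. t \<le> 0 \<Longrightarrow> X t = 0"
    and X_high: "\<And>t. t \<ge> vbar \<Longrightarrow> X t = 1"
    and X_cont: "continuous_on UNIV X"
    and X_dens: "\<And>t. 0 < t \<Longrightarrow> t < vbar \<Longrightarrow> (X has_real_derivative x t) (at t)"
    and x_pos: "\<And>t. 0 < t \<Longrightarrow> t < vbar \<Longrightarrow> x t > 0"
    and y_range: "\<And>D. D > 0 \<Longrightarrow> 0 < y D \<and> y D < vbar"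
    and y_inv: "\<And>D. D > 0 \<Longrightarrow> M * B * (1 - X (y D)) / y D = D"
    and rev_concave: "concave_on {0<..} (\<lambda>D. D * y D)"
    and rev_diff: "\<And>D. D > 0 \<Longrightarrow> (\<lambda>D. D * y D) differentiable (at D)"
    and pt: "0 \<le> ptx" "ptx < pty"
    and bx: "best_strategy D0 y \<alpha> \<beta> pr \<delta> qmax ptx psx qx cx"
    and by': "best_strategy D0 y \<alpha> \<beta> pr \<delta> qmax pty psy qy cy"
    and int_x: "psx > 0" "qx > 0" "qx < qmax" "cx > 0"
    and int_y: "psy > 0" "qy > 0" "qy < qmax" "cy > 0"
  shows "cx > cy"
proof (rule ccontr)
  assume "\<not> cx > cy"
  then have c_le: "cx \<le> cy" by simp
  let ?R = "\<lambda>D. D * y D"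
  define Dx Dy where "Dx = demand D0 \<alpha> \<beta> psx qx cx" and "Dy = demand D0 \<alpha> \<beta> psy qy cy"
  have D_pos: "Dx > 0" "Dy > 0"
    using best_strategy_demand_pos[OF bx] best_strategy_demand_pos[OF by'] by (simp_all add: Dx_def Dy_def)
  have interior_Ici: "interior {0::real..} = {0<..}" by simp
  have D0_deriv: "(D0 has_real_derivative deriv D0 c) (at c)" if "c > 0" for c
    using D0_diff[of c] that at_within_interior[of c "{0..}"]
    by (simp add: interior_Ici DERIV_deriv_iff_real_differentiable)
  have R_deriv: "(?R has_real_derivative deriv ?R D) (at D)" if "D > 0" for D
    using rev_diff[OF that] by (simp add: DERIV_deriv_iff_real_differentiable)
  have "D0 cx \<le> D0 cy"
    using strict_mono_on_leD[OF D0_incr] c_le int_x(4) int_y(4) by simp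
  then have "Dx \<le> Dy"
    unfolding Dx_def Dy_def using best_strategy_demand_mono[OF pos(1,3) delta(2) disc bx _ _ by']
      int_x int_y pt by simp
  then have "deriv ?R Dy \<le> deriv ?R Dx"
    using concave_on_deriv_antimono[OF rev_concave connected_Ioi _ _ _ R_deriv R_deriv] D_pos
    by (simp add: interior_open)
  then have margin_lt: "deriv ?R Dy - pty < deriv ?R Dx - ptx"
    using pt(2) by simp
  have slope_le: "deriv D0 cy \<le> deriv D0 cx"
    using concave_on_deriv_antimono[OF D0_concave connected_Ici _ _ c_le D0_deriv D0_deriv]
      int_x(4) int_y(4) by (simp add: interior_Ici)
  have slope_pos: "deriv D0 cy > 0"
    using concave_strict_mono_deriv_pos[OF D0_concave connected_Ici D0_incr _ _ _ D0_deriv,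
        of cy "cy + 1"] int_y(4) by (simp add: interior_Ici)
  have foc_x: "(deriv ?R Dx - ptx) * deriv D0 cx = 1"
    using best_strategy_cp_first_order[OF bx int_x(4) D0_deriv R_deriv] D_pos int_x(4)
    by (simp add: Dx_def)
  have foc_y: "(deriv ?R Dy - pty) * deriv D0 cy = 1"
    using best_strategy_cp_first_order[OF by' int_y(4) D0_deriv R_deriv] D_pos int_y(4)
    by (simp add: Dy_def)
  show False
    using one_less_mult_of_mult_eq_one[OF foc_y margin_lt slope_pos slope_le] foc_x by simp
qed

end
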